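(* Let $(A,\mu,\alpha)$ be a Hom-associative algebra and $r=\sum_i x_i\otimes y_i\in A\otimes A$ with $(\alpha\otimes\alpha)(r)=r$ and $r$ a solution of the associative Hom-Yang-Baxter equation. Define $R:A\to A$ by $R(a)=\sum_i\alpha(x_i)(ay_i)$ (which equals $\sum_i(x_ia)\alpha(y_i)$). Then $R$ is an $\alpha^2$-Rota-Baxter operator, i.e. $R$ commutes with $\alpha$ and $R(\alpha^2(a))R(\alpha^2(b))=R\big(\alpha^2(a)R(b)+R(a)\alpha^2(b)\big)$ for all $a,b\in A$.
   Context: A Hom-associative algebra $(A,\mu,\alpha)$: linear space, bilinear $\mu(x\otimes y)=xy$, linear $\alpha$ with $\alpha(xy)=\alpha(x)\alpha(y)$ and $\alpha(x)(yz)=(xy)\alpha(z)$. For $r=\sum_ix_i\otimes y_i$ with $(\alpha\otimes\alpha)(r)=r$, $r$ solves the associative Hom-Yang-Baxter equation if $\sum_{i,j}\alpha(x_i)\otimes y_ix_j\otimes\alpha(y_j)=\sum_{i,j}x_ix_j\otimes\alpha(y_j)\otimes\alpha(y_i)+\sum_{i,j}\alpha(x_i)\otimes\alpha(x_j)\otimes y_jy_i$. *)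

theory Defs
  imports Complex_Main
begin

definition bilinear_map ::
  "('k::field \<Rightarrow> 'a::ab_group_add \<Rightarrow> 'a) \<Rightarrow> ('k \<Rightarrow> 'b::ab_group_add \<Rightarrow> 'b)
   \<Rightarrow> ('a \<Rightarrow> 'a \<Rightarrow> 'b) \<Rightarrow> bool" where
  "bilinear_map s t f \<longleftrightarrow>
     (\<forall>x. Vector_Spaces.linear s t (f x)) \<and> (\<forall>y. Vector_Spaces.linear s t (\<lambda>x. f x y))"

definition trilinear_map ::
  "('k::field \<Rightarrow> 'a::ab_group_add \<Rightarrow> 'a) \<Rightarrow> ('k \<Rightarrow> 'b::ab_group_add \<Rightarrow> 'b)
   \<Rightarrow> ('a \<Rightarrow> 'a \<Rightarrow> 'a \<Rightarrow> 'b) \<Rightarrow> bool" where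
  "trilinear_map s t f \<longleftrightarrow>
     (\<forall>y z. Vector_Spaces.linear s t (\<lambda>x. f x y z)) \<and>
     (\<forall>x z. Vector_Spaces.linear s t (\<lambda>y. f x y z)) \<and>
     (\<forall>x y. Vector_Spaces.linear s t (\<lambda>z. f x y z))"

definition hom_assoc_algebra ::
  "('k::field \<Rightarrow> 'a::ab_group_add \<Rightarrow> 'a) \<Rightarrow> ('a \<Rightarrow> 'a \<Rightarrow> 'a) \<Rightarrow> ('a \<Rightarrow> 'a) \<Rightarrow> bool" where
  "hom_assoc_algebra s mu alpha \<longleftrightarrow>
     Vector_Spaces.vector_space s \<and>
     bilinear_map s s mu \<and>
     Vector_Spaces.linear s s alpha \<and>
     (\<forall>x y. alpha (mu x y) = mu (alpha x) (alpha y)) \<and>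
     (\<forall>x y z. mu (alpha x) (mu y z) = mu (mu x y) (alpha z))"

text \<open>Elements of A \<otimes> A are represented by finite lists of pairs
  (the tensor sum of x_i \<otimes> y_i), elements of A \<otimes> A \<otimes> A by lists of triples.
  Two such representatives denote the same tensor iff every bilinear
  (resp. trilinear) form into the ground field agrees on them
  (over a field, (A\<otimes>A)* separates points, so this is exactly equality in A\<otimes>A).\<close>

definition tensor2_eq ::
  "('k::field \<Rightarrow> 'a::ab_group_add \<Rightarrow> 'a) \<Rightarrow> ('a \<times> 'a) list \<Rightarrow> ('a \<times> 'a) list \<Rightarrow> bool" where
  "tensor2_eq s u v \<longleftrightarrow>
     (\<forall>f. bilinear_map s ((*) :: 'k \<Rightarrow> 'k \<Rightarrow> 'k) f \<longrightarrow>
        (\<Sum>(a,b)\<leftarrow>u. f a b) = (\<Sum>(a,b)\<leftarrow>v. f a b))"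

definition tensor3_eq ::
  "('k::field \<Rightarrow> 'a::ab_group_add \<Rightarrow> 'a) \<Rightarrow> ('a \<times> 'a \<times> 'a) list \<Rightarrow> ('a \<times> 'a \<times> 'a) list \<Rightarrow> bool" where
  "tensor3_eq s u v \<longleftrightarrow>
     (\<forall>f. trilinear_map s ((*) :: 'k \<Rightarrow> 'k \<Rightarrow> 'k) f \<longrightarrow>
        (\<Sum>(a,b,c)\<leftarrow>u. f a b c) = (\<Sum>(a,b,c)\<leftarrow>v. f a b c))"

definition alpha_invariant ::
  "('k::field \<Rightarrow> 'a::ab_group_add \<Rightarrow> 'a) \<Rightarrow> ('a \<Rightarrow> 'a) \<Rightarrow> ('a \<times> 'a) list \<Rightarrow> bool" where
  "alpha_invariant s alpha r \<longleftrightarrow> tensor2_eq s (map (\<lambda>(x,y). (alpha x, alpha y)) r) r"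

definition assoc_HYBE ::
  "('k::field \<Rightarrow> 'a::ab_group_add \<Rightarrow> 'a) \<Rightarrow> ('a \<Rightarrow> 'a \<Rightarrow> 'a) \<Rightarrow> ('a \<Rightarrow> 'a) \<Rightarrow> ('a \<times> 'a) list \<Rightarrow> bool" where
  "assoc_HYBE s mu alpha r \<longleftrightarrow>
     tensor3_eq s
       [(alpha xi, mu yi xj, alpha yj). (xi,yi) \<leftarrow> r, (xj,yj) \<leftarrow> r]
       ([(mu xi xj, alpha yj, alpha yi). (xi,yi) \<leftarrow> r, (xj,yj) \<leftarrow> r] @
        [(alpha xi, alpha xj, mu yj yi). (xi,yi) \<leftarrow> r, (xj,yj) \<leftarrow> r])"

definition R_of ::
  "('a::ab_group_add \<Rightarrow> 'a \<Rightarrow> 'a) \<Rightarrow> ('a \<Rightarrow> 'a) \<Rightarrow> ('a \<times> 'a) list \<Rightarrow> 'a \<Rightarrow> 'a" where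
  "R_of mu alpha r a = (\<Sum>(x,y)\<leftarrow>r. mu (alpha x) (mu a y))"

definition alpha2_rota_baxter ::
  "('a::ab_group_add \<Rightarrow> 'a \<Rightarrow> 'a) \<Rightarrow> ('a \<Rightarrow> 'a) \<Rightarrow> ('a \<Rightarrow> 'a) \<Rightarrow> bool" where
  "alpha2_rota_baxter mu alpha R \<longleftrightarrow>
     (\<forall>a. R (alpha a) = alpha (R a)) \<and>
     (\<forall>a b. mu (R (alpha (alpha a))) (R (alpha (alpha b))) =
            R (mu (alpha (alpha a)) (R b) + mu (R a) (alpha (alpha b))))"

end

theory Submission imports Defs begin

text \<open>Since \<open>r\<close> is \<open>\<alpha>\<otimes>\<alpha>\<close>-invariant, \<open>r\<close> may be
  replaced by \<open>(\<alpha>\<^sup>n\<otimes>\<alpha>\<^sup>n)(r)\<close> inside any expression bilinear in its legs; this gives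
  \<open>R\<alpha> = \<alpha>R\<close> at once. For the Rota-Baxter identity, replace both copies of \<open>r\<close> in
  \<open>R(\<alpha>\<^sup>2a)R(\<alpha>\<^sup>2b)\<close> by \<open>(\<alpha>\<^sup>2\<otimes>\<alpha>\<^sup>2)(r)\<close>; Hom-associativity then rewrites the double
  sum as \<open>\<Sum>\<^sub>i\<^sub>,\<^sub>j T(\<alpha>(x\<^sub>i), y\<^sub>ix\<^sub>j, \<alpha>(y\<^sub>j))\<close> for a trilinear \<open>T\<close>. The associative
  Hom-Yang-Baxter equation splits this into two double sums, which (after again
  removing powers of \<open>\<alpha>\<close> from one copy of \<open>r\<close>) are \<open>R(\<alpha>\<^sup>2a\<cdot>R b)\<close> and \<open>R(R a\<cdot>\<alpha>\<^sup>2b)\<close>.\<close>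

lemma linear_functionals_separate_points:
  fixes s :: "'k::field \<Rightarrow> 'a::ab_group_add \<Rightarrow> 'a"
  assumes "vector_space s"
    and "\<And>\<phi>. Vector_Spaces.linear s ((*) :: 'k \<Rightarrow> 'k \<Rightarrow> 'k) \<phi> \<Longrightarrow> \<phi> u = \<phi> v"
  shows "u = v"
proof (rule ccontr)
  assume "u \<noteq> v"
  interpret vs: vector_space s by fact
  interpret vp: vector_space_pair s "(*) :: 'k \<Rightarrow> 'k \<Rightarrow> 'k"
    by unfold_locales (auto simp: algebra_simps)
  have ind: "vs.independent {u - v}"
    using \<open>u \<noteq> v\<close> by (intro vs.independent_insertI) (auto simp: vs.span_empty vs.independent_empty)
  define \<phi> where "\<phi> = vp.construct {u - v} (\<lambda>_. 1::'k)"
  have lin: "Vector_Spaces.linear s (*) \<phi>"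
    unfolding \<phi>_def by (rule vp.linear_construct[OF ind])
  have "\<phi> (u - v) = 1"
    unfolding \<phi>_def by (rule vp.construct_basis[OF ind]) simp
  moreover have "\<phi> (u - v) = \<phi> u - \<phi> v"
    by (rule vp.linear_diff[OF lin])
  ultimately show False
    using assms(2)[OF lin] by simp
qed

lemma linear_compose_fun:
  "Vector_Spaces.linear s t f \<Longrightarrow> Vector_Spaces.linear t u g \<Longrightarrow> Vector_Spaces.linear s u (\<lambda>x. g (f x))"
  using Vector_Spaces.linear_compose[of s t f u g] by (simp add: o_def)

lemma linear_sum_list_map:
  assumes "Vector_Spaces.linear s t f"
  shows "f (\<Sum>p\<leftarrow>xs. g p) = (\<Sum>p\<leftarrow>xs. f (g p))"
proof -
  interpret Vector_Spaces.linear s t f by fact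
  show ?thesis by (induction xs) (simp_all add: add zero)
qed

lemma sum_list_map_concat: "(\<Sum>x\<leftarrow>concat xss. f x) = (\<Sum>xs\<leftarrow>xss. \<Sum>x\<leftarrow>xs. f x)"
  by (induction xss) simp_all

lemma linear_sum_list_fun:
  assumes "vector_space s" and "\<And>q. Vector_Spaces.linear s s (f q)"
  shows "Vector_Spaces.linear s s (\<lambda>x. \<Sum>q\<leftarrow>qs. f q x)"
proof -
  interpret vector_space s by fact
  show ?thesis
  proof (induction qs)
    case Nil
    show ?case by (simp add: Vector_Spaces.linear_iff assms(1))
  next
    case (Cons q qs)
    then show ?case
      using assms(2)[of q] by (simp add: Vector_Spaces.linear_iff assms(1) scale_right_distrib add_ac)
  qed
qed

lemma bilinear_map_sum_list:
  assumes "vector_space s" and "\<And>q. bilinear_map s s (\<lambda>x y. G x y q)"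
  shows "bilinear_map s s (\<lambda>x y. \<Sum>q\<leftarrow>qs. G x y q)"
  using assms unfolding bilinear_map_def by (auto intro!: linear_sum_list_fun)

definition double_sum :: "('a \<times> 'a) list \<Rightarrow> ('a \<Rightarrow> 'a \<Rightarrow> 'a \<Rightarrow> 'a \<Rightarrow> 'b::comm_monoid_add) \<Rightarrow> 'b" where
  "double_sum r F = (\<Sum>p\<leftarrow>r. \<Sum>q\<leftarrow>r. F (fst p) (snd p) (fst q) (snd q))"

context
  fixes s :: "'k::field \<Rightarrow> 'a::ab_group_add \<Rightarrow> 'a"
    and mu :: "'a \<Rightarrow> 'a \<Rightarrow> 'a" and alpha :: "'a \<Rightarrow> 'a"
  assumes hom_assoc: "hom_assoc_algebra s mu alpha"
begin

lemma vector_space: "vector_space s"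
  using hom_assoc by (simp add: hom_assoc_algebra_def)

lemma linear_mu_left: "Vector_Spaces.linear s s (\<lambda>x. mu x y)"
  and linear_mu_right: "Vector_Spaces.linear s s (mu x)"
  and linear_alpha: "Vector_Spaces.linear s s alpha"
  and alpha_mu: "alpha (mu x y) = mu (alpha x) (alpha y)"
  and hom_assoc_law: "mu (alpha x) (mu y z) = mu (mu x y) (alpha z)"
  using hom_assoc by (simp_all add: hom_assoc_algebra_def bilinear_map_def)

lemma mu_add_left: "mu (x + y) z = mu x z + mu y z"
  and mu_add_right: "mu z (x + y) = mu z x + mu z y"
  and mu_scale_left: "mu (s c x) z = s c (mu x z)"
  and mu_scale_right: "mu z (s c x) = s c (mu z x)"
  and alpha_add: "alpha (x + y) = alpha x + alpha y"
  and alpha_scale: "alpha (s c x) = s c (alpha x)"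
  using linear_mu_left[of z] linear_mu_right[of z] linear_alpha
  by (simp_all add: Vector_Spaces.linear_iff)

lemma hom_assoc_law_products:
  "mu (mu (alpha x1) (alpha x2)) (mu y z) = mu (mu (mu x1 x2) y) (alpha z)"
  "mu (mu (mu (alpha x1) (alpha x2)) (alpha x3)) (mu y z) = mu (mu (mu (mu x1 x2) x3) y) (alpha z)"
  "mu (mu (mu (mu (alpha x1) (alpha x2)) (alpha x3)) (alpha x4)) (mu y z)
     = mu (mu (mu (mu (mu x1 x2) x3) x4) y) (alpha z)"
  by (metis alpha_mu hom_assoc_law)+

lemmas linearity_simps =
  Vector_Spaces.linear_iff vector_space mu_add_left mu_add_right mu_scale_left mu_scale_right
  alpha_add alpha_scale

lemma sum_list_eq_if_tensor2_eq:
  assumes "tensor2_eq s u v" and "bilinear_map s s F"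
  shows "(\<Sum>p\<leftarrow>u. F (fst p) (snd p)) = (\<Sum>p\<leftarrow>v. F (fst p) (snd p))"
proof (rule linear_functionals_separate_points[OF vector_space])
  fix \<phi> :: "'a \<Rightarrow> 'k" assume \<phi>: "Vector_Spaces.linear s (*) \<phi>"
  have "bilinear_map s (*) (\<lambda>x y. \<phi> (F x y))"
    using assms(2) \<phi> unfolding bilinear_map_def by (auto intro: linear_compose_fun)
  then have "(\<Sum>(a,b)\<leftarrow>u. \<phi> (F a b)) = (\<Sum>(a,b)\<leftarrow>v. \<phi> (F a b))"
    using assms(1) unfolding tensor2_eq_def by blast
  then show "\<phi> (\<Sum>p\<leftarrow>u. F (fst p) (snd p)) = \<phi> (\<Sum>p\<leftarrow>v. F (fst p) (snd p))"
    by (simp add: linear_sum_list_map[OF \<phi>] split_def)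
qed

lemma sum_list_eq_if_tensor3_eq:
  assumes "tensor3_eq s u v" and "trilinear_map s s T"
  shows "(\<Sum>p\<leftarrow>u. T (fst p) (fst (snd p)) (snd (snd p))) = (\<Sum>p\<leftarrow>v. T (fst p) (fst (snd p)) (snd (snd p)))"
proof (rule linear_functionals_separate_points[OF vector_space])
  fix \<phi> :: "'a \<Rightarrow> 'k" assume \<phi>: "Vector_Spaces.linear s (*) \<phi>"
  have "trilinear_map s (*) (\<lambda>x y z. \<phi> (T x y z))"
    using assms(2) unfolding trilinear_map_def by (metis (no_types) linear_compose_fun[OF _ \<phi>])
  then have "(\<Sum>(a,b,c)\<leftarrow>u. \<phi> (T a b c)) = (\<Sum>(a,b,c)\<leftarrow>v. \<phi> (T a b c))"
    using assms(1) unfolding tensor3_eq_def by blast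
  then show "\<phi> (\<Sum>p\<leftarrow>u. T (fst p) (fst (snd p)) (snd (snd p)))
           = \<phi> (\<Sum>p\<leftarrow>v. T (fst p) (fst (snd p)) (snd (snd p)))"
    by (simp add: linear_sum_list_map[OF \<phi>] split_def)
qed

lemma bilinear_map_compose_alpha_pow:
  assumes "bilinear_map s s F"
  shows "bilinear_map s s (\<lambda>x y. F ((alpha ^^ n) x) ((alpha ^^ n) y))"
proof -
  have "Vector_Spaces.linear s s (alpha ^^ n)"
    by (induction n) (simp_all add: linear_compose_fun[OF _ linear_alpha] linearity_simps)
  then show ?thesis
    using assms unfolding bilinear_map_def by (auto intro: linear_compose_fun)
qed

lemma sum_list_alpha_pow_invariant:
  assumes r: "alpha_invariant s alpha r" and F: "bilinear_map s s F"
  shows "(\<Sum>p\<leftarrow>r. F ((alpha ^^ n) (fst p)) ((alpha ^^ n) (snd p))) = (\<Sum>p\<leftarrow>r. F (fst p) (snd p))"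
proof (induction n)
  case (Suc n)
  have "(\<Sum>p\<leftarrow>map (\<lambda>(x, y). (alpha x, alpha y)) r. F ((alpha ^^ n) (fst p)) ((alpha ^^ n) (snd p)))
      = (\<Sum>p\<leftarrow>r. F ((alpha ^^ n) (fst p)) ((alpha ^^ n) (snd p)))"
    using r unfolding alpha_invariant_def
    by (rule sum_list_eq_if_tensor2_eq) (rule bilinear_map_compose_alpha_pow[OF F])
  with Suc show ?case
    by (simp add: comp_def split_def funpow_swap1)
qed simp

lemma double_sum_alpha_pow_fst:
  assumes "alpha_invariant s alpha r" and "\<And>u v. bilinear_map s s (\<lambda>x y. F x y u v)"
  shows "double_sum r (\<lambda>xi yi xj yj. F ((alpha ^^ n) xi) ((alpha ^^ n) yi) xj yj) = double_sum r F"
  unfolding double_sum_def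
  by (rule sum_list_alpha_pow_invariant[OF assms(1) bilinear_map_sum_list[OF vector_space assms(2)]])

lemma double_sum_alpha_pow_snd:
  assumes "alpha_invariant s alpha r" and "\<And>u v. bilinear_map s s (F u v)"
  shows "double_sum r (\<lambda>xi yi xj yj. F xi yi ((alpha ^^ n) xj) ((alpha ^^ n) yj)) = double_sum r F"
  unfolding double_sum_def
  by (simp add: sum_list_alpha_pow_invariant[OF assms(1,2)])

lemma double_sum_assoc_HYBE:
  assumes "assoc_HYBE s mu alpha r" and "trilinear_map s s T"
  shows "double_sum r (\<lambda>xi yi xj yj. T (alpha xi) (mu yi xj) (alpha yj))
       = double_sum r (\<lambda>xi yi xj yj. T (mu xi xj) (alpha yj) (alpha yi))
       + double_sum r (\<lambda>xi yi xj yj. T (alpha xi) (alpha xj) (mu yj yi))"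
  using sum_list_eq_if_tensor3_eq[OF assms(1)[unfolded assoc_HYBE_def] assms(2)]
  by (simp add: double_sum_def sum_list_map_concat comp_def split_def)

lemma R_of_alpha_commute:
  assumes "alpha_invariant s alpha r"
  shows "R_of mu alpha r (alpha a) = alpha (R_of mu alpha r a)"
proof -
  have "bilinear_map s s (\<lambda>x y. mu (alpha x) (mu (alpha a) y))"
    by (simp add: bilinear_map_def linearity_simps)
  from sum_list_alpha_pow_invariant[OF assms this, of 1] show ?thesis
    by (simp add: R_of_def linear_sum_list_map[OF linear_alpha] alpha_mu split_def)
qed

text \<open>The trilinear \<open>T\<close> through which the Hom-Yang-Baxter equation is applied.\<close>

definition rota_baxter_form :: "'a \<Rightarrow> 'a \<Rightarrow> 'a \<Rightarrow> 'a \<Rightarrow> 'a \<Rightarrow> 'a" where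
  "rota_baxter_form a b u v w =
     mu (mu (mu (alpha u) (alpha (alpha a))) (alpha (alpha v))) (mu (alpha (alpha (alpha b))) (alpha (alpha w)))"

lemma trilinear_rota_baxter_form: "trilinear_map s s (rota_baxter_form a b)"
  by (simp add: rota_baxter_form_def trilinear_map_def linearity_simps)

lemma R_of_product_alpha2:
  assumes "alpha_invariant s alpha r"
  shows "mu (R_of mu alpha r (alpha (alpha a))) (R_of mu alpha r (alpha (alpha b)))
       = double_sum r (\<lambda>xi yi xj yj. rota_baxter_form a b (alpha xi) (mu yi xj) (alpha yj))"
proof -
  define F where "F xi yi xj yj =
    mu (mu (alpha xi) (mu (alpha (alpha a)) yi)) (mu (alpha xj) (mu (alpha (alpha b)) yj))" for xi yi xj yj
  have "mu (R_of mu alpha r (alpha (alpha a))) (R_of mu alpha r (alpha (alpha b))) = double_sum r F"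
    unfolding R_of_def double_sum_def F_def split_def linear_sum_list_map[OF linear_mu_left]
    by (simp add: linear_sum_list_map[OF linear_mu_right])
  also have "\<dots> = double_sum r (\<lambda>xi yi xj yj. F ((alpha ^^ 2) xi) ((alpha ^^ 2) yi) xj yj)"
    by (rule double_sum_alpha_pow_fst[OF assms, symmetric]) (simp add: F_def bilinear_map_def linearity_simps)
  also have "\<dots> = double_sum r (\<lambda>xi yi xj yj.
      F ((alpha ^^ 2) xi) ((alpha ^^ 2) yi) ((alpha ^^ 2) xj) ((alpha ^^ 2) yj))"
    by (rule double_sum_alpha_pow_snd[OF assms, symmetric]) (simp add: F_def bilinear_map_def linearity_simps)
  also have "\<dots> = double_sum r (\<lambda>xi yi xj yj. rota_baxter_form a b (alpha xi) (mu yi xj) (alpha yj))"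
    by (simp add: F_def rota_baxter_form_def numeral_2_eq_2 alpha_mu hom_assoc_law hom_assoc_law_products)
  finally show ?thesis .
qed

lemma R_of_mu_R_of_left:
  assumes "alpha_invariant s alpha r"
  shows "double_sum r (\<lambda>xi yi xj yj. rota_baxter_form a b (mu xi xj) (alpha yj) (alpha yi))
       = R_of mu alpha r (mu (R_of mu alpha r a) (alpha (alpha b)))"
proof -
  define F where "F xi yi xj yj =
    mu (alpha xi) (mu (mu (mu (alpha xj) (mu a yj)) (alpha (alpha b))) yi)" for xi yi xj yj
  have "double_sum r (\<lambda>xi yi xj yj. rota_baxter_form a b (mu xi xj) (alpha yj) (alpha yi))
      = double_sum r (\<lambda>xi yi xj yj. F ((alpha ^^ 3) xi) ((alpha ^^ 3) yi) xj yj)"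
    by (simp add: F_def rota_baxter_form_def numeral_3_eq_3 alpha_mu hom_assoc_law hom_assoc_law_products)
  also have "\<dots> = double_sum r F"
    by (rule double_sum_alpha_pow_fst[OF assms]) (simp add: F_def bilinear_map_def linearity_simps)
  also have "\<dots> = R_of mu alpha r (mu (R_of mu alpha r a) (alpha (alpha b)))"
    unfolding R_of_def double_sum_def F_def split_def
    by (simp add: linear_sum_list_map[OF linear_mu_right] linear_sum_list_map[OF linear_mu_left])
  finally show ?thesis .
qed

lemma R_of_mu_R_of_right:
  assumes "alpha_invariant s alpha r"
  shows "double_sum r (\<lambda>xi yi xj yj. rota_baxter_form a b (alpha xi) (alpha xj) (mu yj yi))
       = R_of mu alpha r (mu (alpha (alpha a)) (R_of mu alpha r b))"
proof -
  define F where "F xi yi xj yj =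
    mu (alpha xi) (mu (mu (alpha (alpha a)) (mu (alpha xj) (mu b yj))) yi)" for xi yi xj yj
  have "double_sum r (\<lambda>xi yi xj yj. rota_baxter_form a b (alpha xi) (alpha xj) (mu yj yi))
      = double_sum r (\<lambda>xi yi xj yj. F ((alpha ^^ 3) xi) ((alpha ^^ 3) yi) xj yj)"
    by (simp add: F_def rota_baxter_form_def numeral_3_eq_3 alpha_mu hom_assoc_law hom_assoc_law_products)
  also have "\<dots> = double_sum r F"
    by (rule double_sum_alpha_pow_fst[OF assms]) (simp add: F_def bilinear_map_def linearity_simps)
  also have "\<dots> = R_of mu alpha r (mu (alpha (alpha a)) (R_of mu alpha r b))"
    unfolding R_of_def double_sum_def F_def split_def
    by (simp add: linear_sum_list_map[OF linear_mu_right] linear_sum_list_map[OF linear_mu_left])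
  finally show ?thesis .
qed

lemma R_of_rota_baxter_identity:
  assumes "alpha_invariant s alpha r" and "assoc_HYBE s mu alpha r"
  shows "mu (R_of mu alpha r (alpha (alpha a))) (R_of mu alpha r (alpha (alpha b)))
       = R_of mu alpha r (mu (alpha (alpha a)) (R_of mu alpha r b) + mu (R_of mu alpha r a) (alpha (alpha b)))"
proof -
  have "R_of mu alpha r (x + y) = R_of mu alpha r x + R_of mu alpha r y" for x y
    by (simp add: R_of_def mu_add_left mu_add_right sum_list_addf split_def)
  then show ?thesis
    using R_of_product_alpha2[OF assms(1)] double_sum_assoc_HYBE[OF assms(2) trilinear_rota_baxter_form]
      R_of_mu_R_of_left[OF assms(1)] R_of_mu_R_of_right[OF assms(1)]
    by (simp add: add.commute)
qed

end

theorem mainTheorem10: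
  fixes s :: "'k::field \<Rightarrow> 'a::ab_group_add \<Rightarrow> 'a"
    and mu :: "'a \<Rightarrow> 'a \<Rightarrow> 'a" and alpha :: "'a \<Rightarrow> 'a"
    and r :: "('a \<times> 'a) list"
  assumes "hom_assoc_algebra s mu alpha"
    and "alpha_invariant s alpha r"
    and "assoc_HYBE s mu alpha r"
  shows "alpha2_rota_baxter mu alpha (R_of mu alpha r)"
  unfolding alpha2_rota_baxter_def
  using R_of_alpha_commute[OF assms(1,2)] R_of_rota_baxter_identity[OF assms] by blast

end
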